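(* Let $\Omega=\{y\in\mathbb{R}^n: a_i^Ty\le b_i,\ i=1,\ldots,m\}$, let $x\in\Omega$ and $\alpha>0$, and suppose the nearly-active index set $I(x,\alpha)$ has $q\le n$ elements and $\{a_i:i\in I(x,\alpha)\}$ are linearly independent; label them so that $I(x,\alpha)=\{1,\ldots,q\}$ and let $A=[a_1\ \cdots\ a_q]\in\mathbb{R}^{n\times q}$. Let $u_1,\ldots,u_n$ be an orthonormal set of left singular vectors of $A$ with $u_1,\ldots,u_q$ spanning $\operatorname{col}(A)$. For $i=1,\ldots,q$ let $\hat d_i:=-(A^\dagger)^Te_i$, $d_i:=\frac{\alpha}{\|\hat d_i\|}\hat d_i$, and let $\alpha_i$ be the largest value in $[0,1]$ such that $x-\alpha_id_i\in\Omega$. Define $$\mathcal{D}=\{d_1,\ldots,d_q\}\cup\{-\alpha_1d_1,\ldots,-\alpha_qd_q\}\cup\{\pm\alpha u_{q+1},\ldots,\pm\alpha u_n\}.$$ Then $\mathcal{D}$ is a $\Lambda$-positive spanning set for $B(x,\alpha)\cap\Omega$ with $\Lambda=q\,\kappa(A)+\sqrt{n-q}$.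
   Context: Nearly-active constraints: $I(x,\alpha):=\{i\in\{1,\ldots,m\}: b_i-\alpha\|a_i\|\le a_i^Tx\}$ (constraints whose boundary hyperplane is within distance $\alpha$ of $x$). $A^\dagger=(A^TA)^{-1}A^T$ is the Moore–Penrose pseudoinverse, $\kappa(A)=\|A\|\,\|A^\dagger\|$ is the condition number (operator 2-norms), $e_i\in\mathbb{R}^q$ the coordinate vectors, $B(y,r)=\{z:\|z-y\|\le r\}$. Given $x\in\Omega$, $\alpha>0$, $\Lambda\ge0$, a set $\{d_1,\ldots,d_p\}$ is a $\Lambda$-positive spanning set for $B(x,\alpha)\cap\Omega$ if $x+d_i\in\Omega$ for all $i$ and, for every $v\in\mathbb{R}^n$ with $x+v\in\Omega$ and $\|v\|\le\alpha$, there exists $c\in\mathbb{R}^p$ with $c\ge0$, $v=\sum_ic_id_i$ and $\|c\|_1\le\Lambda$. *)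

theory Defs
  imports "HOL-Analysis.Analysis"
begin

definition polyhedron :: "(nat \<Rightarrow> real^'n) \<Rightarrow> (nat \<Rightarrow> real) \<Rightarrow> nat \<Rightarrow> (real^'n) set" where
  "polyhedron a b m = {y. \<forall>i\<in>{1..m}. a i \<bullet> y \<le> b i}"

definition nearly_active :: "(nat \<Rightarrow> real^'n) \<Rightarrow> (nat \<Rightarrow> real) \<Rightarrow> nat \<Rightarrow> real^'n \<Rightarrow> real \<Rightarrow> nat set" where
  "nearly_active a b m x \<alpha> = {i\<in>{1..m}. b i - \<alpha> * norm (a i) \<le> a i \<bullet> x}"

definition pos_spanning :: "real \<Rightarrow> (real^'n) set \<Rightarrow> (real^'n) set \<Rightarrow> real^'n \<Rightarrow> real \<Rightarrow> bool" where
  "pos_spanning \<Lambda> D \<Omega> x \<alpha> \<longleftrightarrow>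
     finite D \<and> (\<forall>d\<in>D. x + d \<in> \<Omega>) \<and>
     (\<forall>v. x + v \<in> \<Omega> \<and> norm v \<le> \<alpha> \<longrightarrow>
        (\<exists>c. (\<forall>d\<in>D. c d \<ge> 0) \<and> v = (\<Sum>d\<in>D. c d *\<^sub>R d) \<and> (\<Sum>d\<in>D. \<bar>c d\<bar>) \<le> \<Lambda>))"

text \<open>Moore--Penrose pseudoinverse of a matrix with linearly independent columns.\<close>
definition pinv :: "real^'q^'n \<Rightarrow> real^'n^'q" where
  "pinv A = matrix_inv (transpose A ** A) ** transpose A"

definition kappa :: "real^'q^'n \<Rightarrow> real" where
  "kappa A = onorm (\<lambda>v. A *v v) * onorm (\<lambda>v. pinv A *v v)"

definition left_singular_vector :: "real^'q^'n \<Rightarrow> real^'n \<Rightarrow> bool" where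
  "left_singular_vector A w \<longleftrightarrow> norm w = 1 \<and> (\<exists>\<sigma>\<ge>0. (A ** transpose A) *v w = (\<sigma>\<^sup>2) *\<^sub>R w)"

definition orthonormal_family :: "(nat \<Rightarrow> real^'n) \<Rightarrow> nat \<Rightarrow> bool" where
  "orthonormal_family u n \<longleftrightarrow> (\<forall>k\<in>{1..n}. \<forall>l\<in>{1..n}. u k \<bullet> u l = (if k = l then 1 else 0))"

definition col_matrix :: "(nat \<Rightarrow> real^'n) \<Rightarrow> ('q \<Rightarrow> nat) \<Rightarrow> real^'q^'n" where
  "col_matrix a idx = (\<chi> i j. a (idx j) $ i)"

definition dhat :: "real^'q^'n \<Rightarrow> 'q \<Rightarrow> real^'n" where
  "dhat A j = - (transpose (pinv A) *v axis j 1)"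

definition dvec :: "real \<Rightarrow> real^'q^'n \<Rightarrow> 'q \<Rightarrow> real^'n" where
  "dvec \<alpha> A j = (\<alpha> / norm (dhat A j)) *\<^sub>R dhat A j"

definition step_j :: "(real^'n) set \<Rightarrow> real^'n \<Rightarrow> real \<Rightarrow> real^'q^'n \<Rightarrow> 'q \<Rightarrow> real" where
  "step_j \<Omega> x \<alpha> A j = (GREATEST t. t \<in> {0..1} \<and> x - t *\<^sub>R dvec \<alpha> A j \<in> \<Omega>)"

definition Dset :: "(real^'n) set \<Rightarrow> real^'n \<Rightarrow> real \<Rightarrow> real^'q^'n \<Rightarrow> (nat \<Rightarrow> real^'n) \<Rightarrow> (real^'n) set" where
  "Dset \<Omega> x \<alpha> A u =
     range (dvec \<alpha> A)
     \<union> (\<lambda>j. - (step_j \<Omega> x \<alpha> A j *\<^sub>R dvec \<alpha> A j)) ` UNIV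
     \<union> (\<lambda>k. \<alpha> *\<^sub>R u k) ` {CARD('q)+1..CARD('n)}
     \<union> (\<lambda>k. - (\<alpha> *\<^sub>R u k)) ` {CARD('q)+1..CARD('n)}"

end

theory Submission
  imports Defs
begin

text \<open>The vectors \<open>d\<^sup>^\<^sub>j = -(A\<^sup>\<dagger>)\<^sup>T e\<^sub>j\<close> are dual to the columns of \<open>A\<close>:
  \<open>a\<^sub>i\<^sup>T d\<^sup>^\<^sub>j = -\<delta>\<^sub>i\<^sub>j\<close>. A feasible \<open>v\<close> with \<open>\<parallel>v\<parallel> \<le> \<alpha>\<close> splits along the orthonormal basis
  \<open>u\<close> into a part \<open>w\<close> in the column space of \<open>A\<close> and a part \<open>r\<close> orthogonal to it. By duality
  \<open>w = \<Sum>\<^sub>j \<gamma>\<^sub>j d\<^sub>j\<close> with \<open>\<gamma>\<^sub>j = -a\<^sub>j\<^sup>T v \<parallel>d\<^sup>^\<^sub>j\<parallel> / \<alpha>\<close>, and each term costs at most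
  \<open>\<kappa>(A)\<close>, using \<open>-\<alpha>\<^sub>j d\<^sub>j\<close> when \<open>\<gamma>\<^sub>j < 0\<close>; \<open>r\<close> is a combination of the \<open>\<plusminus>\<alpha> u\<^sub>k\<close>, \<open>k > q\<close>, of weight
  \<open>\<Sum>\<^sub>k |v\<^sup>T u\<^sub>k| / \<alpha> \<le> \<surd>(n - q)\<close> by Cauchy-Schwarz and Parseval. All of \<open>x + d\<close>, \<open>d \<in> \<D>\<close>,
  are feasible because constraints outside \<open>I(x, \<alpha>)\<close> have slack exceeding \<open>\<alpha> \<parallel>a\<^sub>i\<parallel>\<close>, while
  the nearly active ones do not increase along \<open>d\<^sub>j\<close> and vanish on \<open>u\<^sub>k\<close>, \<open>k > q\<close>.\<close>

section \<open>Bounded nonnegative combinations\<close>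

definition pos_comb_bounded :: "'a::real_vector set \<Rightarrow> real \<Rightarrow> 'a \<Rightarrow> bool" where
  "pos_comb_bounded D L v \<longleftrightarrow>
     (\<exists>c. (\<forall>d\<in>D. c d \<ge> 0) \<and> v = (\<Sum>d\<in>D. c d *\<^sub>R d) \<and> (\<Sum>d\<in>D. \<bar>c d\<bar>) \<le> L)"

lemma pos_spanningI:
  assumes "finite D" "\<And>d. d \<in> D \<Longrightarrow> x + d \<in> \<Omega>"
    and "\<And>v. x + v \<in> \<Omega> \<Longrightarrow> norm v \<le> \<alpha> \<Longrightarrow> pos_comb_bounded D L v"
  shows "pos_spanning L D \<Omega> x \<alpha>"
  using assms unfolding pos_spanning_def pos_comb_bounded_def by blast

lemma pos_comb_bounded_zero: "pos_comb_bounded D 0 0"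
  unfolding pos_comb_bounded_def by (rule exI[of _ "\<lambda>_. 0"]) simp

lemma pos_comb_bounded_mono: "pos_comb_bounded D L v \<Longrightarrow> L \<le> L' \<Longrightarrow> pos_comb_bounded D L' v"
  unfolding pos_comb_bounded_def by force

lemma pos_comb_bounded_add:
  assumes "pos_comb_bounded D L v" "pos_comb_bounded D L' v'"
  shows "pos_comb_bounded D (L + L') (v + v')"
proof -
  obtain c where c: "\<forall>d\<in>D. c d \<ge> 0" "v = (\<Sum>d\<in>D. c d *\<^sub>R d)" "(\<Sum>d\<in>D. \<bar>c d\<bar>) \<le> L"
    using assms(1) unfolding pos_comb_bounded_def by blast
  obtain c' where c': "\<forall>d\<in>D. c' d \<ge> 0" "v' = (\<Sum>d\<in>D. c' d *\<^sub>R d)" "(\<Sum>d\<in>D. \<bar>c' d\<bar>) \<le> L'"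
    using assms(2) unfolding pos_comb_bounded_def by blast
  have "(\<Sum>d\<in>D. \<bar>c d + c' d\<bar>) = (\<Sum>d\<in>D. \<bar>c d\<bar>) + (\<Sum>d\<in>D. \<bar>c' d\<bar>)"
    using c(1) c'(1) by (simp add: sum.distrib[symmetric])
  then show ?thesis
    unfolding pos_comb_bounded_def using c c'
    by (intro exI[of _ "\<lambda>d. c d + c' d"]) (simp add: scaleR_add_left sum.distrib)
qed

lemma pos_comb_bounded_sum:
  assumes "finite K" "\<And>k. k \<in> K \<Longrightarrow> pos_comb_bounded D (L k) (v k)"
  shows "pos_comb_bounded D (\<Sum>k\<in>K. L k) (\<Sum>k\<in>K. v k)"
  using assms
proof (induction K rule: finite_induct)
  case empty
  then show ?case by (simp add: pos_comb_bounded_zero)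
next
  case (insert k K)
  then show ?case by (simp add: pos_comb_bounded_add)
qed

lemma pos_comb_bounded_scaleR_mem:
  assumes "finite D" "d \<in> D" "l \<ge> 0"
  shows "pos_comb_bounded D l (l *\<^sub>R d)"
proof -
  let ?c = "\<lambda>e. if e = d then l else 0"
  have "(\<Sum>e\<in>D. ?c e *\<^sub>R e) = l *\<^sub>R d" "(\<Sum>e\<in>D. \<bar>?c e\<bar>) = l"
    using assms by (simp_all add: if_distrib[of "\<lambda>t. t *\<^sub>R _"] if_distrib[of abs] cong: if_cong)
  then show ?thesis
    unfolding pos_comb_bounded_def using assms by (intro exI[of _ ?c]) simp
qed

section \<open>Orthonormal families\<close>

lemma orthonormal_familyD:
  assumes "orthonormal_family u N"
  shows "inj_on u {1..N}" "pairwise orthogonal (u ` {1..N})"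
    and "\<And>k. k \<in> {1..N} \<Longrightarrow> norm (u k) = 1"
proof -
  have uu: "u k \<bullet> u l = (if k = l then 1 else 0)" if "k \<in> {1..N}" "l \<in> {1..N}" for k l
    using assms that unfolding orthonormal_family_def by blast
  show "inj_on u {1..N}"
    by (rule inj_onI) (metis uu one_neq_zero)
  show "pairwise orthogonal (u ` {1..N})"
    unfolding pairwise_def orthogonal_def using uu by fastforce
  show "norm (u k) = 1" if "k \<in> {1..N}" for k
    using uu[OF that that] by (simp add: norm_eq_1)
qed

lemma orthonormal_family_span:
  fixes u :: "nat \<Rightarrow> real^'n"
  assumes "orthonormal_family u CARD('n)"
  shows "span (u ` {1..CARD('n)}) = UNIV"
proof -
  let ?B = "u ` {1..CARD('n)}"
  note u = orthonormal_familyD[OF assms]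
  have "0 \<notin> ?B" using u(3) by fastforce
  then have "independent ?B" by (rule pairwise_orthogonal_independent[OF u(2)])
  moreover have "card ?B = CARD('n)" using u(1) by (simp add: card_image)
  ultimately show ?thesis
    using card_ge_dim_independent[of ?B UNIV] by auto
qed

lemma orthonormal_family_expand:
  fixes u :: "nat \<Rightarrow> real^'n"
  assumes "orthonormal_family u CARD('n)"
  shows "v = (\<Sum>k\<in>{1..CARD('n)}. (v \<bullet> u k) *\<^sub>R u k)"
proof -
  note u = orthonormal_familyD[OF assms]
  have "v \<in> span (u ` {1..CARD('n)})" unfolding orthonormal_family_span[OF assms] by simp
  then have "(\<Sum>w\<in>u ` {1..CARD('n)}. (v \<bullet> w) *\<^sub>R w) = v"
    using u by (intro orthonormal_basis_expand) auto
  then show ?thesis unfolding sum.reindex[OF u(1)] o_def by (rule sym)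
qed

lemma orthonormal_family_Parseval:
  fixes u :: "nat \<Rightarrow> real^'n"
  assumes "orthonormal_family u CARD('n)"
  shows "(\<Sum>k\<in>{1..CARD('n)}. (v \<bullet> u k)\<^sup>2) = (norm v)\<^sup>2"
proof -
  have "(norm v)\<^sup>2 = v \<bullet> (\<Sum>k\<in>{1..CARD('n)}. (v \<bullet> u k) *\<^sub>R u k)"
    unfolding power2_norm_eq_inner by (rule arg_cong[OF orthonormal_family_expand[OF assms]])
  then show ?thesis by (simp add: inner_sum_right power2_eq_square)
qed

lemma orthonormal_family_sum_abs_inner_le:
  fixes u :: "nat \<Rightarrow> real^'n"
  assumes "orthonormal_family u CARD('n)" "K \<subseteq> {1..CARD('n)}"
  shows "(\<Sum>k\<in>K. \<bar>v \<bullet> u k\<bar>) \<le> sqrt (card K) * norm v"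
proof (rule power2_le_imp_le)
  have Bessel: "(\<Sum>k\<in>K. \<bar>v \<bullet> u k\<bar>\<^sup>2) \<le> (norm v)\<^sup>2"
    unfolding power2_abs orthonormal_family_Parseval[OF assms(1), symmetric]
    by (rule sum_mono2) (use assms(2) in auto)
  have "(\<Sum>k\<in>K. \<bar>v \<bullet> u k\<bar>)\<^sup>2 \<le> (\<Sum>k\<in>K. \<bar>v \<bullet> u k\<bar>\<^sup>2) * card K"
    by (rule sum_squared_le_sum_of_squares)
  also have "\<dots> \<le> (norm v)\<^sup>2 * card K"
    using Bessel by (rule mult_right_mono) simp
  finally show "(\<Sum>k\<in>K. \<bar>v \<bullet> u k\<bar>)\<^sup>2 \<le> (sqrt (card K) * norm v)\<^sup>2"
    by (simp add: power_mult_distrib mult.commute)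
qed simp

lemma pos_comb_bounded_orthonormal_part:
  fixes u :: "nat \<Rightarrow> real^'n"
  assumes "orthonormal_family u CARD('n)" "K \<subseteq> {1..CARD('n)}" "\<alpha> > 0" "norm v \<le> \<alpha>"
    and "finite D" "\<And>k. k \<in> K \<Longrightarrow> \<alpha> *\<^sub>R u k \<in> D \<and> - (\<alpha> *\<^sub>R u k) \<in> D"
  shows "pos_comb_bounded D (sqrt (card K)) (\<Sum>k\<in>K. (v \<bullet> u k) *\<^sub>R u k)"
proof (rule pos_comb_bounded_mono)
  have "finite K" using assms(2) finite_subset by blast
  then show "pos_comb_bounded D (\<Sum>k\<in>K. \<bar>v \<bullet> u k\<bar> / \<alpha>) (\<Sum>k\<in>K. (v \<bullet> u k) *\<^sub>R u k)"
  proof (rule pos_comb_bounded_sum)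
    fix k assume k: "k \<in> K"
    define e where "e = sgn (v \<bullet> u k) *\<^sub>R (\<alpha> *\<^sub>R u k)"
    have "e \<in> D \<or> v \<bullet> u k = 0"
      using assms(6)[OF k] by (auto simp: e_def sgn_if)
    moreover have "(v \<bullet> u k) *\<^sub>R u k = (\<bar>v \<bullet> u k\<bar> / \<alpha>) *\<^sub>R e"
      using assms(3) by (simp add: e_def abs_mult_sgn)
    ultimately show "pos_comb_bounded D (\<bar>v \<bullet> u k\<bar> / \<alpha>) ((v \<bullet> u k) *\<^sub>R u k)"
      using assms(3) pos_comb_bounded_scaleR_mem[OF assms(5)] pos_comb_bounded_zero
      by auto
  qed
  have "(\<Sum>k\<in>K. \<bar>v \<bullet> u k\<bar>) \<le> sqrt (card K) * \<alpha>"
    using orthonormal_family_sum_abs_inner_le[OF assms(1,2), of v] assms(4)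
    by (meson mult_left_mono order_trans real_sqrt_ge_zero of_nat_0_le_iff)
  then show "(\<Sum>k\<in>K. \<bar>v \<bullet> u k\<bar> / \<alpha>) \<le> sqrt (card K)"
    using assms(3) by (simp add: pos_divide_le_eq flip: sum_divide_distrib)
qed

section \<open>The pseudoinverse\<close>

lemma transpose_mult_component: "(transpose A *v y) $ j = column j A \<bullet> (y :: real^'n)"
  by (simp add: matrix_vector_mul_component transpose_def column_def inner_vec_def mult.commute)

lemma norm_row_le_onorm:
  fixes A :: "real^'n^'m"
  shows "norm (row i A) \<le> onorm ((*v) A)"
proof -
  let ?r = "row i A"
  have "(norm ?r)\<^sup>2 = (A *v ?r) $ i"
    by (simp add: power2_norm_eq_inner matrix_vector_mul_component row_def)
  also have "\<dots> \<le> norm (A *v ?r)" using component_le_norm_cart by (rule order_trans[OF abs_ge_self])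
  also have "\<dots> \<le> onorm ((*v) A) * norm ?r"
    by (rule onorm) (rule matrix_vector_mul_bounded_linear)
  finally show ?thesis
    by (cases "norm ?r = 0") (auto simp: power2_eq_square onorm_pos_le[OF matrix_vector_mul_bounded_linear])
qed

lemma invertible_gram_matrix:
  fixes A :: "real^'q^'n"
  assumes "inj ((*v) A)"
  shows "invertible (transpose A ** A)"
proof -
  have "c = 0" if "(transpose A ** A) *v c = 0" for c
  proof -
    have "(A *v c) \<bullet> (A *v c) = c \<bullet> ((transpose A ** A) *v c)"
      by (simp add: dot_lmul_matrix[symmetric] inner_commute flip: matrix_vector_mul_assoc)
    then have "A *v c = A *v 0" using that by simp
    then show "c = 0" by (rule injD[OF assms])
  qed
  then show ?thesis
    by (simp add: invertible_left_inverse matrix_left_invertible_ker)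
qed

lemma
  fixes A :: "real^'q^'n"
  assumes "inj ((*v) A)"
  shows pinv_mult_self: "pinv A ** A = mat 1"
    and transpose_pinv_mult_gram: "transpose (pinv A) ** (transpose A ** A) = A"
proof -
  let ?G = "transpose A ** A"
  have G: "?G ** matrix_inv ?G = mat 1 \<and> matrix_inv ?G ** ?G = mat 1"
    using invertible_gram_matrix[OF assms] unfolding invertible_def matrix_inv_def by (rule someI_ex)
  then show "pinv A ** A = mat 1"
    by (simp add: pinv_def matrix_mul_assoc)
  have "transpose (pinv A) ** ?G = transpose (?G ** pinv A)"
    by (simp add: matrix_transpose_mul)
  also have "?G ** pinv A = transpose A"
    using G by (simp add: pinv_def matrix_mul_assoc)
  finally show "transpose (pinv A) ** ?G = A" by simp
qed

lemma row_inner_column: "row i A \<bullet> column j B = (A ** B) $ i $ j"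
  by (simp add: inner_vec_def row_def column_def matrix_matrix_mult_def)

lemma dhat_eq_row: "dhat A j = - row j (pinv A)"
  by (simp add: dhat_def matrix_vector_mult_basis del: transpose_matrix_vector)

lemma column_inner_dhat:
  fixes A :: "real^'q^'n"
  assumes "inj ((*v) A)"
  shows "column l A \<bullet> dhat A j = (if l = j then -1 else 0)"
  using pinv_mult_self[OF assms]
  by (simp add: dhat_eq_row inner_commute[of _ "row j _"] row_inner_column mat_def)

lemma column_space_expand_dhat:
  fixes A :: "real^'q^'n"
  assumes "inj ((*v) A)" "w \<in> range ((*v) A)"
  shows "w = (\<Sum>j\<in>UNIV. - (column j A \<bullet> w) *\<^sub>R dhat A j)"
proof -
  obtain c where "w = A *v c" using assms(2) by blast
  then have "w = transpose (pinv A) *v (transpose A *v w)"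
    using transpose_pinv_mult_gram[OF assms(1)]
    by (simp add: matrix_vector_mul_assoc del: transpose_matrix_vector)
  also have "\<dots> = (\<Sum>j\<in>UNIV. (column j A \<bullet> w) *\<^sub>R row j (pinv A))"
    by (simp add: matrix_mult_sum[of "transpose (pinv A)"] transpose_mult_component
        scalar_mult_eq_scaleR del: transpose_matrix_vector)
  finally show ?thesis by (simp add: dhat_eq_row)
qed

lemma one_le_norm_column_dhat:
  fixes A :: "real^'q^'n"
  assumes "inj ((*v) A)"
  shows "1 \<le> norm (column j A) * norm (dhat A j)"
  using Cauchy_Schwarz_ineq2[of "column j A" "dhat A j"] column_inner_dhat[OF assms, of j j]
  by simp

lemma norm_column_dhat_le_kappa:
  fixes A :: "real^'q^'n"
  shows "norm (column j A) * norm (dhat A j) \<le> kappa A"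
  unfolding kappa_def dhat_eq_row norm_minus_cancel
  by (intro mult_mono norm_column_le_onorm norm_row_le_onorm onorm_pos_le
      matrix_vector_mul_bounded_linear norm_ge_zero)

lemma column_col_matrix: "column j (col_matrix a idx) = a (idx j)"
  by (simp add: column_def col_matrix_def vec_eq_iff)

lemma inj_col_matrix:
  assumes "inj idx" "inj_on a (range idx)" "independent (a ` range idx)"
  shows "inj ((*v) (col_matrix a idx))"
proof -
  let ?A = "col_matrix a idx"
  have inj_a_idx: "inj (a \<circ> idx)" using assms(1,2) by (rule comp_inj_on)
  have "\<forall>j. c j = 0" if c: "(\<Sum>j\<in>UNIV. c j *s column j ?A) = 0" for c
  proof -
    define c' where "c' w = c (inv (a \<circ> idx) w)" for w
    have "(\<Sum>w\<in>a ` range idx. c' w *\<^sub>R w) = (\<Sum>j\<in>UNIV. c' (a (idx j)) *\<^sub>R a (idx j))"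
      unfolding image_comp sum.reindex[OF inj_a_idx] by simp
    also have "\<dots> = (\<Sum>j\<in>UNIV. c j *s column j ?A)"
      using inv_f_f[OF inj_a_idx] by (simp add: c'_def column_col_matrix scalar_mult_eq_scaleR)
    finally have "(\<Sum>w\<in>a ` range idx. c' w *\<^sub>R w) = 0"
      using c by simp
    then have "\<forall>w\<in>a ` range idx. c' w = 0"
      using assms(3) unfolding independent_explicit by blast
    then show ?thesis
      using inv_f_f[OF inj_a_idx] by (auto simp: c'_def)
  qed
  then have "\<exists>B. B ** ?A = mat 1"
    unfolding matrix_left_invertible_independent_columns by blast
  then have ker: "\<forall>z. ?A *v z = 0 \<longrightarrow> z = 0"
    unfolding matrix_left_invertible_ker .
  show ?thesis
  proof (rule injI)
    fix y z assume "?A *v y = ?A *v z"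
    then have "?A *v (y - z) = 0" by (simp add: matrix_vector_mult_diff_distrib)
    then show "y = z" using ker by auto
  qed
qed

section \<open>The positive spanning set\<close>

lemma polyhedron_add_short_step:
  assumes "x \<in> polyhedron a b m" "norm z \<le> \<alpha>"
    and "\<And>i. i \<in> nearly_active a b m x \<alpha> \<Longrightarrow> a i \<bullet> z \<le> b i - a i \<bullet> x"
  shows "x + z \<in> polyhedron a b m"
  unfolding polyhedron_def
proof safe
  fix i assume i: "i \<in> {1..m}"
  show "a i \<bullet> (x + z) \<le> b i"
  proof (cases "i \<in> nearly_active a b m x \<alpha>")
    case True
    then show ?thesis using assms(3)[OF True] by (simp add: inner_add_right)
  next
    case False
    then have "a i \<bullet> x < b i - \<alpha> * norm (a i)" using i unfolding nearly_active_def by auto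
    moreover have "a i \<bullet> z \<le> norm (a i) * \<alpha>"
      using norm_cauchy_schwarz[of "a i" z] mult_left_mono[OF assms(2) norm_ge_zero[of "a i"]] by linarith
    ultimately show ?thesis by (simp add: algebra_simps)
  qed
qed

locale independent_nearly_active =
  fixes a :: "nat \<Rightarrow> real^'n" and b :: "nat \<Rightarrow> real" and m :: nat
    and x :: "real^'n" and \<alpha> :: real and idx :: "'q::finite \<Rightarrow> nat"
  assumes x_in: "x \<in> polyhedron a b m"
    and alpha_pos: "\<alpha> > 0"
    and idx_bij: "bij_betw idx UNIV (nearly_active a b m x \<alpha>)"
    and a_inj: "inj_on a (nearly_active a b m x \<alpha>)"
    and a_indep: "independent (a ` nearly_active a b m x \<alpha>)"
begin

abbreviation "\<Omega> \<equiv> polyhedron a b m"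

abbreviation "A \<equiv> col_matrix a idx"

lemma range_idx: "range idx = nearly_active a b m x \<alpha>"
  using idx_bij by (simp add: bij_betw_def)

lemma idx_constraint: "idx j \<in> {1..m}"
  using range_idx unfolding nearly_active_def by blast

lemma constraint_at_x: "a (idx j) \<bullet> x \<le> b (idx j)"
  using x_in idx_constraint unfolding polyhedron_def by blast

lemma inj_A: "inj ((*v) A)"
  using idx_bij a_inj a_indep by (intro inj_col_matrix) (auto simp: bij_betw_def)

lemma inner_dhat: "a (idx l) \<bullet> dhat A j = (if l = j then -1 else 0)"
  using column_inner_dhat[OF inj_A] by (simp add: column_col_matrix)

lemma norm_dhat_pos: "norm (dhat A j) > 0"
  using inner_dhat[of j j] by auto

lemma inner_dvec: "a (idx l) \<bullet> dvec \<alpha> A j = (if l = j then - \<alpha> / norm (dhat A j) else 0)"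
  by (simp add: dvec_def inner_dhat)

lemma norm_dvec: "norm (dvec \<alpha> A j) = \<alpha>"
  using norm_dhat_pos[of j] alpha_pos by (simp add: dvec_def)

lemma add_feasible:
  assumes "norm z \<le> \<alpha>" "\<And>j. a (idx j) \<bullet> z \<le> b (idx j) - a (idx j) \<bullet> x"
  shows "x + z \<in> \<Omega>"
  using x_in assms(1)
proof (rule polyhedron_add_short_step)
  fix i assume "i \<in> nearly_active a b m x \<alpha>"
  then obtain j where "i = idx j" using range_idx by blast
  then show "a i \<bullet> z \<le> b i - a i \<bullet> x" using assms(2) by simp
qed

lemma dvec_feasible: "x + dvec \<alpha> A j \<in> \<Omega>"
proof (rule add_feasible)
  fix l
  have "a (idx l) \<bullet> dvec \<alpha> A j \<le> 0"
    using alpha_pos norm_dhat_pos[of j] by (simp add: inner_dvec)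
  then show "a (idx l) \<bullet> dvec \<alpha> A j \<le> b (idx l) - a (idx l) \<bullet> x"
    using constraint_at_x[of l] by linarith
qed (simp add: norm_dvec)

lemma column_space_expand_dvec:
  assumes "w \<in> range ((*v) A)"
  shows "w = (\<Sum>j\<in>UNIV. (- (a (idx j) \<bullet> w) * norm (dhat A j) / \<alpha>) *\<^sub>R dvec \<alpha> A j)"
proof -
  have "- (a (idx j) \<bullet> w) *\<^sub>R dhat A j
        = (- (a (idx j) \<bullet> w) * norm (dhat A j) / \<alpha>) *\<^sub>R dvec \<alpha> A j" for j
    using alpha_pos norm_dhat_pos[of j] by (simp add: dvec_def)
  then show ?thesis
    using column_space_expand_dhat[OF inj_A assms] by (simp add: column_col_matrix)
qed

text \<open>Among the nearly active constraints only \<open>idx j\<close> grows along \<open>-d\<^sub>j\<close>; it becomes active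
  after the step \<open>max_step j\<close>, so that \<open>\<alpha>\<^sub>j = min 1 (max_step j)\<close>.\<close>

definition max_step :: "'q \<Rightarrow> real" where
  "max_step j = (b (idx j) - a (idx j) \<bullet> x) * norm (dhat A j) / \<alpha>"

lemma le_max_step_iff: "t \<le> max_step j \<longleftrightarrow> t * \<alpha> / norm (dhat A j) \<le> b (idx j) - a (idx j) \<bullet> x"
  using alpha_pos norm_dhat_pos[of j] by (simp add: max_step_def field_simps)

lemma backstep_feasible_iff:
  assumes "0 \<le> t" "t \<le> 1"
  shows "x - t *\<^sub>R dvec \<alpha> A j \<in> \<Omega> \<longleftrightarrow> t \<le> max_step j"
proof
  assume "x - t *\<^sub>R dvec \<alpha> A j \<in> \<Omega>"
  then have "a (idx j) \<bullet> (x - t *\<^sub>R dvec \<alpha> A j) \<le> b (idx j)"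
    using idx_constraint unfolding polyhedron_def by blast
  then show "t \<le> max_step j"
    by (simp add: le_max_step_iff inner_diff_right inner_dvec)
next
  assume t: "t \<le> max_step j"
  have "x + - (t *\<^sub>R dvec \<alpha> A j) \<in> \<Omega>"
  proof (rule add_feasible)
    show "norm (- (t *\<^sub>R dvec \<alpha> A j)) \<le> \<alpha>"
      using assms alpha_pos by (simp add: norm_dvec mult_left_le_one_le)
    fix l
    show "a (idx l) \<bullet> - (t *\<^sub>R dvec \<alpha> A j) \<le> b (idx l) - a (idx l) \<bullet> x"
      using t constraint_at_x[of l] by (simp add: le_max_step_iff inner_dvec)
  qed
  then show "x - t *\<^sub>R dvec \<alpha> A j \<in> \<Omega>" by simp
qed

lemma max_step_nonneg: "max_step j \<ge> 0"
  using constraint_at_x[of j] alpha_pos norm_dhat_pos[of j] by (simp add: max_step_def)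

lemma step_j_eq: "step_j \<Omega> x \<alpha> A j = min 1 (max_step j)"
  unfolding step_j_def
  by (rule Greatest_equality) (auto simp: backstep_feasible_iff max_step_nonneg)

lemma inner_le_slack:
  assumes "x + v \<in> \<Omega>"
  shows "a (idx j) \<bullet> v \<le> b (idx j) - a (idx j) \<bullet> x"
proof -
  have "a (idx j) \<bullet> (x + v) \<le> b (idx j)"
    using assms idx_constraint[of j] unfolding polyhedron_def by blast
  then show ?thesis by (simp add: inner_add_right)
qed

lemma dvec_coeff_le_kappa:
  assumes "norm v \<le> \<alpha>"
  shows "\<bar>a (idx j) \<bullet> v\<bar> * norm (dhat A j) / \<alpha> \<le> kappa A"
proof -
  have "\<bar>a (idx j) \<bullet> v\<bar> \<le> norm (a (idx j)) * \<alpha>"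
    using Cauchy_Schwarz_ineq2[of "a (idx j)" v] mult_left_mono[OF assms norm_ge_zero]
    by (rule order_trans)
  then have "\<bar>a (idx j) \<bullet> v\<bar> * norm (dhat A j) \<le> norm (a (idx j)) * \<alpha> * norm (dhat A j)"
    by (rule mult_right_mono) simp
  then have "\<bar>a (idx j) \<bullet> v\<bar> * norm (dhat A j) / \<alpha> \<le> norm (a (idx j)) * norm (dhat A j)"
    using alpha_pos by (simp add: pos_divide_le_eq mult_ac)
  also have "\<dots> \<le> kappa A"
    using norm_column_dhat_le_kappa[of j A] by (simp add: column_col_matrix)
  finally show ?thesis .
qed

text \<open>When \<open>\<alpha>\<^sub>j < 1\<close>, replacing \<open>d\<^sub>j\<close> by \<open>-\<alpha>\<^sub>j d\<^sub>j\<close> inflates the coefficient by \<open>1/\<alpha>\<^sub>j\<close>; it then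
  becomes \<open>a\<^sub>j\<^sup>T v / (b\<^sub>j - a\<^sub>j\<^sup>T x)\<close>, which is at most \<open>1\<close> because \<open>x + v\<close> is feasible, and
  \<open>1 \<le> \<parallel>a\<^sub>j\<parallel> \<parallel>d\<^sup>^\<^sub>j\<parallel> \<le> \<kappa>(A)\<close>.\<close>

lemma dvec_coeff_div_step_le_kappa:
  assumes "x + v \<in> \<Omega>" "norm v \<le> \<alpha>" "a (idx j) \<bullet> v > 0"
  shows "(a (idx j) \<bullet> v) * norm (dhat A j) / \<alpha> / min 1 (max_step j) \<le> kappa A"
proof (cases "max_step j \<le> 1")
  case True
  have slack: "a (idx j) \<bullet> v \<le> b (idx j) - a (idx j) \<bullet> x"
    by (rule inner_le_slack[OF assms(1)])
  have "(a (idx j) \<bullet> v) * norm (dhat A j) / \<alpha> / min 1 (max_step j)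
      = (a (idx j) \<bullet> v) / (b (idx j) - a (idx j) \<bullet> x)"
    using True assms(3) slack alpha_pos norm_dhat_pos[of j] by (simp add: max_step_def)
  also have "\<dots> \<le> 1"
    using assms(3) slack by simp
  also have "\<dots> \<le> kappa A"
    using one_le_norm_column_dhat[OF inj_A, of j] norm_column_dhat_le_kappa[of j A] by simp
  finally show ?thesis .
next
  case False
  then show ?thesis
    using dvec_coeff_le_kappa[OF assms(2), of j] assms(3) by simp
qed

end

locale independent_nearly_active_basis = independent_nearly_active a b m x \<alpha> idx
  for a :: "nat \<Rightarrow> real^'n" and b m x \<alpha> and idx :: "'q::finite \<Rightarrow> nat" +
  fixes u :: "nat \<Rightarrow> real^'n"
  assumes u_orth: "orthonormal_family u CARD('n)"
    and q_le_n: "CARD('q) \<le> CARD('n)"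
    and span_u: "span (u ` {1..CARD('q)}) = range ((*v) (col_matrix a idx))"
begin

abbreviation "D \<equiv> Dset \<Omega> x \<alpha> A u"

lemma finite_D: "finite D"
  by (simp add: Dset_def)

lemma dvec_in_D: "dvec \<alpha> A j \<in> D"
  by (simp add: Dset_def)

lemma backstep_in_D: "- (min 1 (max_step j) *\<^sub>R dvec \<alpha> A j) \<in> D"
  unfolding Dset_def step_j_eq[symmetric] by blast

lemma inner_u_complement:
  assumes "k \<in> {CARD('q)+1..CARD('n)}"
  shows "a (idx l) \<bullet> u k = 0"
proof -
  have "a (idx l) = A *v axis l 1"
    by (simp add: matrix_vector_mult_basis column_col_matrix)
  then have "a (idx l) \<in> span (u ` {1..CARD('q)})"
    unfolding span_u by simp
  then have "orthogonal (u k) (a (idx l))"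
  proof (rule orthogonal_to_span)
    fix w assume "w \<in> u ` {1..CARD('q)}"
    then obtain k' where "k' \<in> {1..CARD('q)}" "w = u k'" by blast
    then show "orthogonal (u k) w"
      using assms q_le_n u_orth by (simp add: orthonormal_family_def orthogonal_def)
  qed
  then show ?thesis by (simp add: orthogonal_def inner_commute)
qed

lemma D_feasible:
  assumes "d \<in> D"
  shows "x + d \<in> \<Omega>"
proof -
  consider j where "d = dvec \<alpha> A j" | j where "d = - (min 1 (max_step j) *\<^sub>R dvec \<alpha> A j)"
    | k where "k \<in> {CARD('q)+1..CARD('n)}" "d = \<alpha> *\<^sub>R u k \<or> d = - (\<alpha> *\<^sub>R u k)"
    using assms unfolding Dset_def step_j_eq by blast
  then show ?thesis
  proof cases
    case (2 j)
    then show ?thesis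
      using backstep_feasible_iff[of "min 1 (max_step j)" j] max_step_nonneg[of j] by simp
  next
    case (3 k)
    have "norm d = \<alpha>"
      using 3 alpha_pos orthonormal_familyD(3)[OF u_orth, of k] by auto
    moreover have "a (idx l) \<bullet> d = 0" for l
      using 3 inner_u_complement by auto
    ultimately show ?thesis
      using constraint_at_x by (intro add_feasible) simp_all
  qed (simp add: dvec_feasible)
qed

lemma pos_comb_bounded_dvec:
  assumes "x + v \<in> \<Omega>" "norm v \<le> \<alpha>"
  shows "pos_comb_bounded D (kappa A)
           ((- (a (idx j) \<bullet> v) * norm (dhat A j) / \<alpha>) *\<^sub>R dvec \<alpha> A j)"
proof (cases "a (idx j) \<bullet> v \<le> 0")
  case True
  then have "- (a (idx j) \<bullet> v) * norm (dhat A j) / \<alpha> \<ge> 0"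
    using alpha_pos by (simp add: divide_nonpos_pos mult_nonpos_nonneg)
  with True show ?thesis
    using dvec_coeff_le_kappa[OF assms(2), of j]
    by (intro pos_comb_bounded_mono[OF pos_comb_bounded_scaleR_mem[OF finite_D dvec_in_D]]) simp_all
next
  case False
  define s where "s = min 1 (max_step j)"
  define c where "c = (a (idx j) \<bullet> v) * norm (dhat A j) / \<alpha> / s"
  have "max_step j > 0"
    using False inner_le_slack[OF assms(1), of j] alpha_pos norm_dhat_pos[of j]
    by (simp add: max_step_def)
  then have "s > 0" by (simp add: s_def)
  then have "(- (a (idx j) \<bullet> v) * norm (dhat A j) / \<alpha>) *\<^sub>R dvec \<alpha> A j
      = c *\<^sub>R (- (s *\<^sub>R dvec \<alpha> A j))"
    by (simp add: c_def)
  moreover have "c \<ge> 0"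
    using False alpha_pos \<open>s > 0\<close> by (simp add: c_def)
  moreover have "c \<le> kappa A"
    using dvec_coeff_div_step_le_kappa[OF assms, of j] False by (simp add: c_def s_def)
  ultimately show ?thesis
    using backstep_in_D[of j, folded s_def]
    by (metis pos_comb_bounded_mono pos_comb_bounded_scaleR_mem finite_D)
qed

lemma pos_spanning_D:
  "pos_spanning (CARD('q) * kappa A + sqrt (real CARD('n) - real CARD('q))) D \<Omega> x \<alpha>"
proof (rule pos_spanningI[OF finite_D D_feasible])
  fix v assume v: "x + v \<in> \<Omega>" "norm v \<le> \<alpha>"
  let ?q = "CARD('q)" and ?n = "CARD('n)"
  define w where "w = (\<Sum>k\<in>{1..?q}. (v \<bullet> u k) *\<^sub>R u k)"
  define r where "r = (\<Sum>k\<in>{?q+1..?n}. (v \<bullet> u k) *\<^sub>R u k)"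
  have "v = (\<Sum>k\<in>{1..?q + (?n - ?q)}. (v \<bullet> u k) *\<^sub>R u k)"
    using orthonormal_family_expand[OF u_orth, of v] q_le_n by simp
  also have "\<dots> = w + r"
    unfolding w_def r_def by (subst sum.ub_add_nat) (use q_le_n in auto)
  finally have v_split: "v = w + r" .
  have "a (idx j) \<bullet> r = 0" for j
    unfolding r_def inner_sum_right by (intro sum.neutral) (simp add: inner_u_complement)
  then have a_w: "a (idx j) \<bullet> w = a (idx j) \<bullet> v" for j
    using v_split by (simp add: inner_add_right)
  have "w \<in> range ((*v) A)"
    unfolding w_def span_u[symmetric] by (intro span_sum span_scale span_base) auto
  then have "w = (\<Sum>j\<in>UNIV. (- (a (idx j) \<bullet> w) * norm (dhat A j) / \<alpha>) *\<^sub>R dvec \<alpha> A j)"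
    by (rule column_space_expand_dvec)
  also have "\<dots> = (\<Sum>j\<in>UNIV. (- (a (idx j) \<bullet> v) * norm (dhat A j) / \<alpha>) *\<^sub>R dvec \<alpha> A j)"
    by (simp only: a_w)
  also have "pos_comb_bounded D (\<Sum>j\<in>(UNIV :: 'q set). kappa A) \<dots>"
    by (rule pos_comb_bounded_sum) (simp, rule pos_comb_bounded_dvec[OF v])
  moreover have "pos_comb_bounded D (sqrt (card {?q+1..?n})) r"
    unfolding r_def
    by (rule pos_comb_bounded_orthonormal_part[OF u_orth _ alpha_pos v(2) finite_D])
      (auto simp: Dset_def)
  ultimately have "pos_comb_bounded D (?q * kappa A + sqrt (card {?q+1..?n})) (w + r)"
    by (simp add: pos_comb_bounded_add)
  then show "pos_comb_bounded D (?q * kappa A + sqrt (real ?n - real ?q)) v"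
    using v_split q_le_n by simp
qed

end

lemma pos_spanning_no_nearly_active:
  fixes u :: "nat \<Rightarrow> real^'n"
  assumes "x \<in> polyhedron a b m" "\<alpha> > 0" "nearly_active a b m x \<alpha> = {}"
    and "orthonormal_family u CARD('n)"
  shows "pos_spanning (sqrt CARD('n))
           ((\<lambda>k. \<alpha> *\<^sub>R u k) ` {1..CARD('n)} \<union> (\<lambda>k. - (\<alpha> *\<^sub>R u k)) ` {1..CARD('n)})
           (polyhedron a b m) x \<alpha>"
    (is "pos_spanning _ ?D _ _ _")
proof (rule pos_spanningI)
  show "finite ?D" by simp
next
  fix d assume "d \<in> ?D"
  then have "norm d \<le> \<alpha>"
    using orthonormal_familyD(3)[OF assms(4)] assms(2) by auto
  then show "x + d \<in> polyhedron a b m"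
    by (rule polyhedron_add_short_step[OF assms(1)]) (simp add: assms(3))
next
  fix v :: "real^'n" assume "x + v \<in> polyhedron a b m" "norm v \<le> \<alpha>"
  then have "pos_comb_bounded ?D (sqrt (card {1..CARD('n)})) (\<Sum>k\<in>{1..CARD('n)}. (v \<bullet> u k) *\<^sub>R u k)"
    by (intro pos_comb_bounded_orthonormal_part[OF assms(4) _ assms(2)]) auto
  then show "pos_comb_bounded ?D (sqrt CARD('n)) v"
    unfolding orthonormal_family_expand[OF assms(4), of v, symmetric] by simp
qed

theorem theorem5p8:
  fixes a :: "nat \<Rightarrow> real^'n" and b :: "nat \<Rightarrow> real" and m :: nat
    and x :: "real^'n" and \<alpha> :: real
    and idx :: "'q::finite \<Rightarrow> nat" and u :: "nat \<Rightarrow> real^'n"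
  defines "\<Omega> \<equiv> polyhedron a b m"
    and "I \<equiv> nearly_active a b m x \<alpha>"
  assumes x_in: "x \<in> \<Omega>"
    and alpha_pos: "\<alpha> > 0"
    and q_le_n: "card I \<le> CARD('n)"
    and lin_indep: "inj_on a I \<and> independent (a ` I)"
    and u_orth: "orthonormal_family u CARD('n)"
  shows
    "(bij_betw idx UNIV I \<and>
      (\<forall>k\<in>{1..CARD('n)}. left_singular_vector (col_matrix a idx) (u k)) \<and>
      span (u ` {1..CARD('q)}) = range (\<lambda>c. col_matrix a idx *v c)
      \<longrightarrow> pos_spanning (real CARD('q) * kappa (col_matrix a idx) + sqrt (real CARD('n) - real CARD('q)))
            (Dset \<Omega> x \<alpha> (col_matrix a idx) u) \<Omega> x \<alpha>)
     \<and>
     (I = {} \<longrightarrow>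
       pos_spanning (sqrt (real CARD('n)))
         ((\<lambda>k. \<alpha> *\<^sub>R u k) ` {1..CARD('n)} \<union> (\<lambda>k. - (\<alpha> *\<^sub>R u k)) ` {1..CARD('n)}) \<Omega> x \<alpha>)"
proof (intro conjI impI, goal_cases)
  case 1
  \<comment> \<open>Only orthonormality and the span of \<open>u\<^sub>1, \<dots>, u\<^sub>q\<close> matter, not that the \<open>u\<^sub>k\<close> are
    singular vectors.\<close>
  then have bij: "bij_betw idx UNIV I"
    and span: "span (u ` {1..CARD('q)}) = range ((*v) (col_matrix a idx))"
    by auto
  have "CARD('q) \<le> CARD('n)"
    using bij_betw_same_card[OF bij] q_le_n by simp
  then interpret independent_nearly_active_basis a b m x \<alpha> idx u
    using x_in alpha_pos bij lin_indep u_orth span by unfold_locales (simp_all add: \<Omega>_def I_def)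
  show ?case
    using pos_spanning_D by (simp add: \<Omega>_def)
next
  case 2
  then show ?case
    using pos_spanning_no_nearly_active[OF x_in[unfolded \<Omega>_def] alpha_pos _ u_orth]
    by (simp add: \<Omega>_def I_def)
qed

end
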